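(* Assume the setting in the context, and assume moreover: (i) there is $\bar\nu>0$ with $n\nu_{ni}\le\bar\nu$ for all $i$ and all $n$; (ii) the average dependency neighbourhood size satisfies $d_n=o(n)$; (iii) there exist $p,q\in[2,\infty]$ with $1/p+1/q=1/2$ such that $\sup_{i\in\mathbb N}\|\tilde y_i\|_p<\infty$ and $\sup_{i\in\mathbb N}\|\psi_i\|_q<\infty$. Then $\mathbb E[(\hat\tau_n(z,\omega)-\tau_n)^2]\to0$ as $n\to\infty$, i.e. the aggregate Riesz estimator is consistent in mean square. Moreover, if in addition $\sup_{n\in\mathbb N}d_n<\infty$, then $\hat\tau_n-\tau_n=O_p(n^{-1/2})$.
   Context: Let $(\Omega,\mathcal F,P)$ be a probability space (latent environment) and $\mathcal Z$ a measurable space of treatment assignments with a known randomisation probability measure $\mu$. For units $i=1,\dots,n$, the potential outcome is a measurable map $\tilde y_i:\mathcal Z\times\Omega\to\mathbb R$ of the form $\tilde y_i(z,\omega)=y_i(z,x_i(\omega),\epsilon_i(\omega))$ with $y_i,x_i,\epsilon_i$ measurable. For $p\ge1$, $L^p=L^p(\mathcal Z\times\Omega)$ is the space of measurable $u$ with $\|u\|_p=(\int|u(z,\omega)|^p\mu(\mathrm dz)P(\mathrm d\omega))^{1/p}<\infty$; $\mathbb E$ denotes expectation with respect to $\mu(\mathrm dz)P(\mathrm d\omega)$. Each $\tilde y_i$ lies in a model space $\mathcal M_i\subset L^2$ (taken closed) with inner product $\langle u,v\rangle=\mathbb E[uv]$. The treatment effect $\theta_i$ is a continuous linear functional on $\mathcal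 M_i$ with Riesz representer $\psi_i\in\mathcal M_i$, i.e. $\theta_i(u)=\langle u,\psi_i\rangle$ for all $u\in\mathcal M_i$. The Riesz estimator is $\hat\theta_i(z,\omega)=\tilde y_i(z,\omega)\psi_i(z,\omega)$. Given weights $\nu_{ni}\ge0$, $\tau_n=\sum_{i=1}^n\nu_{ni}\theta_i(\tilde y_i)$ and $\hat\tau_n(z,\omega)=\sum_{i=1}^n\nu_{ni}\hat\theta_i(z,\omega)$. Dependency neighbourhoods: for each $i$, $N_i$ is the intersection of all subsets $M\subset\{1,\dots,n\}$ such that the pair $(\tilde y_i,\psi_i)$ is independent of $\{(\tilde y_j,\psi_j):j\notin M\}$; $d_n=n^{-1}\sum_{i=1}^n|N_i|$. *)

theory Defs
  imports "HOL-Probability.Probability" "HOL-Library.Landau_Symbols"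
begin

definition L2_fun :: "'a measure \<Rightarrow> ('a \<Rightarrow> real) \<Rightarrow> bool" where
  "L2_fun M f \<longleftrightarrow> f \<in> borel_measurable M \<and> integrable M (\<lambda>x. (f x)\<^sup>2)"

definition closed_L2_subspace :: "'a measure \<Rightarrow> ('a \<Rightarrow> real) set \<Rightarrow> bool" where
  "closed_L2_subspace M S \<longleftrightarrow>
     (\<forall>u\<in>S. L2_fun M u) \<and> (\<lambda>_. 0) \<in> S \<and>
     (\<forall>u\<in>S. \<forall>v\<in>S. \<forall>a::real. (\<lambda>x. a * u x + v x) \<in> S) \<and>
     (\<forall>u f. (\<forall>k::nat. u k \<in> S) \<longrightarrow> L2_fun M f \<longrightarrow>
        (\<lambda>k. integral\<^sup>L M (\<lambda>x. (u k x - f x)\<^sup>2)) \<longlonglongrightarrow> 0 \<longrightarrow> f \<in> S)"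

definition Lp_norm_le :: "'a measure \<Rightarrow> ereal \<Rightarrow> ('a \<Rightarrow> real) \<Rightarrow> real \<Rightarrow> bool" where
  "Lp_norm_le M p f C \<longleftrightarrow> f \<in> borel_measurable M \<and> 0 \<le> C \<and>
     (if p = \<infinity> then (AE x in M. \<bar>f x\<bar> \<le> C)
      else (\<integral>\<^sup>+ x. ennreal (\<bar>f x\<bar> powr real_of_ereal p) \<partial>M) \<le> ennreal (C powr real_of_ereal p))"

text \<open>Dependency neighbourhood \<open>N_i\<close> among units \<open>1..n\<close>: intersection of all
  \<open>S \<subseteq> {1..n}\<close> such that \<open>(y_i,\<psi>_i)\<close> (encoded as a
  family indexed by the singleton \<open>{i}\<close>, so both sides live in the same type) is independent of \<open>{(y_j,\<psi>_j) : j \<notin> S}\<close>.\<close>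
definition dep_nbhd :: "'a measure \<Rightarrow> (nat \<Rightarrow> 'a \<Rightarrow> real) \<Rightarrow> (nat \<Rightarrow> 'a \<Rightarrow> real)
    \<Rightarrow> nat \<Rightarrow> nat \<Rightarrow> nat set" where
  "dep_nbhd M y psi n i = \<Inter> {S. S \<subseteq> {1..n} \<and>
     prob_space.indep_var M
       (Pi\<^sub>M {i} (\<lambda>_. borel \<Otimes>\<^sub>M borel)) (\<lambda>x. \<lambda>j\<in>{i}. (y j x, psi j x))
       (Pi\<^sub>M ({1..n} - S) (\<lambda>_. borel \<Otimes>\<^sub>M borel))
       (\<lambda>x. \<lambda>j\<in>{1..n} - S. (y j x, psi j x))}"

definition avg_dep :: "'a measure \<Rightarrow> (nat \<Rightarrow> 'a \<Rightarrow> real) \<Rightarrow> (nat \<Rightarrow> 'a \<Rightarrow> real) \<Rightarrow> nat \<Rightarrow> real" where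
  "avg_dep M y psi n = (\<Sum>i\<in>{1..n}. real (card (dep_nbhd M y psi n i))) / real n"

definition bigO_p :: "'a measure \<Rightarrow> (nat \<Rightarrow> 'a \<Rightarrow> real) \<Rightarrow> (nat \<Rightarrow> real) \<Rightarrow> bool" where
  "bigO_p M X r \<longleftrightarrow> (\<forall>\<epsilon>>0. \<exists>K N. \<forall>n\<ge>N.
      measure M {x \<in> space M. \<bar>X n x\<bar> > K * r n} < \<epsilon>)"

end

theory Submission
  imports Defs
begin

(*
  With W i = y i * psi i - theta i (y i), the Riesz property gives theta i (y i) = E[y i * psi i],
  so the W i are centred and the estimation error is the weighted sum of the W i.
  Hoelder's inequality for 1/p + 1/q = 1/2 (via Young's inequality) bounds E[(W i)^2]
  uniformly by some K. For j outside the dependency neighbourhood of i, W i and W j are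
  independent, hence uncorrelated, so expanding the square of the sum leaves at most
  sum_i |N i| = n d_n nonzero terms, each at most (nu_bar/n)^2 K. Hence the mean squared
  error is at most nu_bar^2 K d_n / n, which tends to 0 when d_n = o(n); when d_n is bounded,
  Chebyshev's inequality turns the bound into O_p(n^(-1/2)).
*)

lemma ereal_conjugate_half_cases:
  fixes p q :: ereal
  assumes "2 \<le> p" "2 \<le> q" "1 / p + 1 / q = 1 / 2"
  obtains "p = \<infinity>" "q = 2"
    | "p = 2" "q = \<infinity>"
    | a b where "p = ereal a" "q = ereal b" "2 < a" "2 < b" "1 / a + 1 / b = 1 / 2"
proof (cases p; cases q)
  fix a b assume ab: "p = ereal a" "q = ereal b"
  with assms have "2 \<le> a" "2 \<le> b" "1 / a + 1 / b = 1 / 2"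
    by (auto simp: one_ereal_def)
  moreover from this have "2 < a" "2 < b"
    by (smt (verit) divide_pos_pos le_divide_eq_1_pos)+
  ultimately show thesis using ab that(3) by blast
qed (use assms that in \<open>auto simp: one_ereal_def\<close>)

lemma Lp_norm_le_integrable_powr:
  fixes f :: "'a \<Rightarrow> real"
  assumes "Lp_norm_le M (ereal a) f C"
  shows "integrable M (\<lambda>x. \<bar>f x\<bar> powr a)" "(\<integral>x. \<bar>f x\<bar> powr a \<partial>M) \<le> C powr a"
proof -
  have [measurable]: "f \<in> borel_measurable M"
    and nn: "(\<integral>\<^sup>+x. ennreal (\<bar>f x\<bar> powr a) \<partial>M) \<le> ennreal (C powr a)"
    using assms by (auto simp: Lp_norm_le_def)
  then show int: "integrable M (\<lambda>x. \<bar>f x\<bar> powr a)"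
    by (intro integrableI_bounded) (auto simp: order_le_less_trans[OF nn])
  have "ennreal (\<integral>x. \<bar>f x\<bar> powr a \<partial>M) \<le> ennreal (C powr a)"
    using nn by (simp add: nn_integral_eq_integral[OF int])
  then show "(\<integral>x. \<bar>f x\<bar> powr a \<partial>M) \<le> C powr a"
    by simp
qed

lemma integral_square_mult_le_Linf_L2:
  fixes f g :: "'a \<Rightarrow> real"
  assumes f: "Lp_norm_le M \<infinity> f Cf" and g: "Lp_norm_le M 2 g Cg"
  shows "integrable M (\<lambda>x. (f x * g x)\<^sup>2)" "(\<integral>x. (f x * g x)\<^sup>2 \<partial>M) \<le> Cf\<^sup>2 * Cg\<^sup>2"
proof -
  have [measurable]: "f \<in> borel_measurable M" "g \<in> borel_measurable M"
    and "0 \<le> Cg" and f_bdd: "AE x in M. \<bar>f x\<bar> \<le> Cf"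
    using f g by (auto simp: Lp_norm_le_def)
  have g2: "integrable M (\<lambda>x. (g x)\<^sup>2)" "(\<integral>x. (g x)\<^sup>2 \<partial>M) \<le> Cg\<^sup>2"
    using Lp_norm_le_integrable_powr[of M 2 g Cg] g \<open>0 \<le> Cg\<close> by simp_all
  have dom: "AE x in M. (f x * g x)\<^sup>2 \<le> Cf\<^sup>2 * (g x)\<^sup>2"
    using f_bdd
  proof eventually_elim
    case (elim x)
    then have "(f x)\<^sup>2 \<le> Cf\<^sup>2"
      by (metis abs_ge_zero power2_abs power_mono)
    then show ?case
      by (simp add: power_mult_distrib mult_right_mono)
  qed
  have bound_int: "integrable M (\<lambda>x. Cf\<^sup>2 * (g x)\<^sup>2)"
    using g2(1) by simp
  show int: "integrable M (\<lambda>x. (f x * g x)\<^sup>2)"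
    by (rule Bochner_Integration.integrable_bound[OF bound_int]) (use dom in auto)
  have "(\<integral>x. (f x * g x)\<^sup>2 \<partial>M) \<le> (\<integral>x. Cf\<^sup>2 * (g x)\<^sup>2 \<partial>M)"
    by (rule integral_mono_AE[OF int bound_int dom])
  also have "\<dots> \<le> Cf\<^sup>2 * Cg\<^sup>2"
    using g2(2) by (simp add: mult_left_mono)
  finally show "(\<integral>x. (f x * g x)\<^sup>2 \<partial>M) \<le> Cf\<^sup>2 * Cg\<^sup>2" .
qed

lemma integral_square_mult_le_Young:
  fixes f g :: "'a \<Rightarrow> real"
  assumes f: "Lp_norm_le M (ereal a) f Cf" and g: "Lp_norm_le M (ereal b) g Cg"
    and ab: "2 < a" "2 < b" "1 / a + 1 / b = 1 / 2"
  shows "integrable M (\<lambda>x. (f x * g x)\<^sup>2)"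
    "(\<integral>x. (f x * g x)\<^sup>2 \<partial>M) \<le> 2 / a * Cf powr a + 2 / b * Cg powr b"
proof -
  have [measurable]: "f \<in> borel_measurable M" "g \<in> borel_measurable M"
    using f g by (auto simp: Lp_norm_le_def)
  note fa = Lp_norm_le_integrable_powr[OF f] and gb = Lp_norm_le_integrable_powr[OF g]
  define h where "h x = 2 / a * \<bar>f x\<bar> powr a + 2 / b * \<bar>g x\<bar> powr b" for x
  have h_int: "integrable M h"
    unfolding h_def using fa gb by simp
  \<comment> \<open>Young's inequality for the conjugate exponents \<open>a/2\<close> and \<open>b/2\<close>\<close>
  have dom: "(f x * g x)\<^sup>2 \<le> h x" for x
  proof -
    have "(f x)\<^sup>2 * (g x)\<^sup>2 \<le> ((f x)\<^sup>2) powr (a/2) / (a/2) + ((g x)\<^sup>2) powr (b/2) / (b/2)"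
      using ab by (intro Youngs_inequality) (auto simp: field_simps)
    moreover have "(z\<^sup>2) powr (c/2) = \<bar>z\<bar> powr c" for z c :: real
    proof -
      have "z\<^sup>2 = \<bar>z\<bar> powr 2" by simp
      then show ?thesis by (simp only:) (subst powr_powr, simp)
    qed
    ultimately show ?thesis
      by (simp add: h_def power_mult_distrib mult.commute)
  qed
  show int: "integrable M (\<lambda>x. (f x * g x)\<^sup>2)"
    by (intro Bochner_Integration.integrable_bound[OF h_int])
      (auto intro: order_trans[OF dom abs_ge_self])
  have "(\<integral>x. (f x * g x)\<^sup>2 \<partial>M) \<le> (\<integral>x. h x \<partial>M)"
    using dom by (intro integral_mono int h_int)
  also have "\<dots> = 2 / a * (\<integral>x. \<bar>f x\<bar> powr a \<partial>M) + 2 / b * (\<integral>x. \<bar>g x\<bar> powr b \<partial>M)"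
    unfolding h_def using fa gb by simp
  also have "\<dots> \<le> 2 / a * Cf powr a + 2 / b * Cg powr b"
    using fa gb ab by (intro add_mono mult_left_mono) auto
  finally show "(\<integral>x. (f x * g x)\<^sup>2 \<partial>M) \<le> 2 / a * Cf powr a + 2 / b * Cg powr b" .
qed

lemma square_moments_uniformly_bounded:
  fixes f g :: "'i \<Rightarrow> 'a \<Rightarrow> real"
  assumes pq: "2 \<le> p" "2 \<le> q" "1 / p + 1 / q = 1 / 2"
    and "\<exists>C. \<forall>i. Lp_norm_le M p (f i) C" and "\<exists>C. \<forall>i. Lp_norm_le M q (g i) C"
  obtains K where "0 \<le> K" "\<And>i. integrable M (\<lambda>x. (f i x * g i x)\<^sup>2)"
    "\<And>i. (\<integral>x. (f i x * g i x)\<^sup>2 \<partial>M) \<le> K"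
proof -
  obtain Cf Cg where f: "\<And>i. Lp_norm_le M p (f i) Cf" and g: "\<And>i. Lp_norm_le M q (g i) Cg"
    using assms(4,5) by blast
  from pq show thesis
  proof (cases rule: ereal_conjugate_half_cases)
    case 1
    note fg = integral_square_mult_le_Linf_L2[OF f[unfolded 1(1)] g[unfolded 1(2)]]
    show thesis
      by (rule that[of "Cf\<^sup>2 * Cg\<^sup>2"]) (simp_all add: fg)
  next
    case 2
    note gf = integral_square_mult_le_Linf_L2[OF g[unfolded 2(2)] f[unfolded 2(1)]]
    show thesis
      by (rule that[of "Cg\<^sup>2 * Cf\<^sup>2"]) (use gf in \<open>simp_all add: mult.commute\<close>)
  next
    case (3 a b)
    note fg = integral_square_mult_le_Young[OF f[unfolded 3(1)] g[unfolded 3(2)] 3(3-5)]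
    show thesis
      by (rule that[of "2 / a * Cf powr a + 2 / b * Cg powr b"]) (use fg 3 in simp_all)
  qed
qed

lemma (in prob_space) indep_var_const:
  assumes X: "random_variable S X" and c: "c \<in> space T"
  shows "indep_var S X T (\<lambda>_. c)"
proof -
  have "indep_set {X -` A \<inter> space M | A. A \<in> sets S} {(\<lambda>_. c) -` B \<inter> space M | B. B \<in> sets T}"
    unfolding indep_sets2_eq
  proof safe
    fix A assume "A \<in> sets S"
    then show "X -` A \<inter> space M \<in> events" by (rule measurable_sets[OF X])
  next
    fix B assume "B \<in> sets T"
    show "(\<lambda>_. c) -` B \<inter> space M \<in> events" by (cases "c \<in> B") auto
  next
    fix A B assume "A \<in> sets S" "B \<in> sets T"
    show "prob (X -` A \<inter> space M \<inter> ((\<lambda>_. c) -` B \<inter> space M)) =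
          prob (X -` A \<inter> space M) * prob ((\<lambda>_. c) -` B \<inter> space M)"
      by (cases "c \<in> B") (auto simp: prob_space Int_absorb2)
  qed
  moreover have "(\<lambda>i. {case_bool X (\<lambda>_. c) i -` A \<inter> space M | A. A \<in> sets (case_bool S T i)}) =
      case_bool {X -` A \<inter> space M | A. A \<in> sets S} {(\<lambda>_. c) -` B \<inter> space M | B. B \<in> sets T}"
    by (rule ext) (simp split: bool.split)
  ultimately show ?thesis
    using X c unfolding indep_var_def indep_vars_def2 indep_set_def
    by (auto split: bool.split)
qed

lemma (in prob_space) dep_nbhd_subset:
  assumes [measurable]: "\<And>i. y i \<in> borel_measurable M" "\<And>i. psi i \<in> borel_measurable M"
  shows "dep_nbhd M y psi n i \<subseteq> {1..n}"
proof -
  \<comment> \<open>\<open>S = {1..n}\<close> is admissible, since nothing is left outside it; without an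
    admissible \<open>S\<close> the intersection would be \<open>UNIV\<close>.\<close>
  have "random_variable (Pi\<^sub>M {i} (\<lambda>_. borel \<Otimes>\<^sub>M borel)) (\<lambda>x. \<lambda>j\<in>{i}. (y j x, psi j x))"
    by measurable
  then have "indep_var (Pi\<^sub>M {i} (\<lambda>_. borel \<Otimes>\<^sub>M borel)) (\<lambda>x. \<lambda>j\<in>{i}. (y j x, psi j x))
      (Pi\<^sub>M {} (\<lambda>_. borel \<Otimes>\<^sub>M borel)) (\<lambda>_. \<lambda>j\<in>{}. undefined)"
    by (rule indep_var_const) (simp add: space_PiM)
  moreover have "(\<lambda>x. \<lambda>j\<in>{1..n} - {1..n}. (y j x, psi j x)) = (\<lambda>_. \<lambda>j\<in>{}. undefined)"
    by (auto simp: restrict_def)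
  ultimately show ?thesis
    unfolding dep_nbhd_def by (intro Inter_lower) simp
qed

lemma (in prob_space) indep_var_outside_dep_nbhd:
  fixes g h :: "real \<times> real \<Rightarrow> real"
  assumes [measurable]: "\<And>i. y i \<in> borel_measurable M" "\<And>i. psi i \<in> borel_measurable M"
    and g: "g \<in> borel_measurable (borel \<Otimes>\<^sub>M borel)" and h: "h \<in> borel_measurable (borel \<Otimes>\<^sub>M borel)"
    and j: "j \<in> {1..n}" "j \<notin> dep_nbhd M y psi n i"
  shows "indep_var borel (\<lambda>x. g (y i x, psi i x)) borel (\<lambda>x. h (y j x, psi j x))"
proof -
  from j obtain S where "S \<subseteq> {1..n}" "j \<notin> S" and indep: "indep_var
       (Pi\<^sub>M {i} (\<lambda>_. borel \<Otimes>\<^sub>M borel)) (\<lambda>x. \<lambda>k\<in>{i}. (y k x, psi k x))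
       (Pi\<^sub>M ({1..n} - S) (\<lambda>_. borel \<Otimes>\<^sub>M borel)) (\<lambda>x. \<lambda>k\<in>{1..n} - S. (y k x, psi k x))"
    unfolding dep_nbhd_def by blast
  with j have j_out: "j \<in> {1..n} - S" by blast
  have mg: "(\<lambda>F. g (F i)) \<in> borel_measurable (Pi\<^sub>M {i} (\<lambda>_. borel \<Otimes>\<^sub>M borel))"
    by (rule measurable_compose[OF measurable_component_singleton[where M="\<lambda>_. borel \<Otimes>\<^sub>M borel"] g]) simp
  have mh: "(\<lambda>F. h (F j)) \<in> borel_measurable (Pi\<^sub>M ({1..n} - S) (\<lambda>_. borel \<Otimes>\<^sub>M borel))"
    by (rule measurable_compose[OF measurable_component_singleton[where M="\<lambda>_. borel \<Otimes>\<^sub>M borel"] h])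
      (rule j_out)
  from indep_var_compose[OF indep mg mh] j_out show ?thesis
    by (simp add: comp_def)
qed

lemma integral_square_weighted_sum_le:
  fixes W :: "'i \<Rightarrow> 'a \<Rightarrow> real" and a :: "'i \<Rightarrow> real" and N :: "'i \<Rightarrow> 'i set"
  assumes I: "finite I"
    and [measurable]: "\<And>i. i \<in> I \<Longrightarrow> W i \<in> borel_measurable M"
    and W_sq: "\<And>i. i \<in> I \<Longrightarrow> integrable M (\<lambda>x. (W i x)\<^sup>2)"
    and W_sq_le: "\<And>i. i \<in> I \<Longrightarrow> (\<integral>x. (W i x)\<^sup>2 \<partial>M) \<le> K"
    and N: "\<And>i. i \<in> I \<Longrightarrow> N i \<subseteq> I"
    and uncorrelated: "\<And>i j. i \<in> I \<Longrightarrow> j \<in> I - N i \<Longrightarrow> (\<integral>x. W i x * W j x \<partial>M) = 0"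
    and a: "\<And>i. i \<in> I \<Longrightarrow> 0 \<le> a i" "\<And>i. i \<in> I \<Longrightarrow> a i \<le> A"
  shows "integrable M (\<lambda>x. (\<Sum>i\<in>I. a i * W i x)\<^sup>2)"
    and "(\<integral>x. (\<Sum>i\<in>I. a i * W i x)\<^sup>2 \<partial>M) \<le> A\<^sup>2 * K * (\<Sum>i\<in>I. real (card (N i)))"
proof -
  have prod_le: "W i x * W j x \<le> ((W i x)\<^sup>2 + (W j x)\<^sup>2) / 2" for i j x
    using sum_squares_bound[of "W i x" "W j x"] by simp
  have abs_prod_le: "\<bar>W i x * W j x\<bar> \<le> ((W i x)\<^sup>2 + (W j x)\<^sup>2) / 2" for i j x
    using sum_squares_bound[of "\<bar>W i x\<bar>" "\<bar>W j x\<bar>"] by (simp add: abs_mult)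
  have WW_int: "integrable M (\<lambda>x. W i x * W j x)" if "i \<in> I" "j \<in> I" for i j
  proof (rule Bochner_Integration.integrable_bound)
    show "integrable M (\<lambda>x. ((W i x)\<^sup>2 + (W j x)\<^sup>2) / 2)"
      using that W_sq by simp
    show "(\<lambda>x. W i x * W j x) \<in> borel_measurable M"
      using that by measurable
    show "AE x in M. norm (W i x * W j x) \<le> norm (((W i x)\<^sup>2 + (W j x)\<^sup>2) / 2)"
      using abs_prod_le by simp
  qed
  have WW_le: "(\<integral>x. W i x * W j x \<partial>M) \<le> K" if "i \<in> I" "j \<in> I" for i j
  proof -
    have "(\<integral>x. W i x * W j x \<partial>M) \<le> (\<integral>x. ((W i x)\<^sup>2 + (W j x)\<^sup>2) / 2 \<partial>M)"
      using that W_sq by (intro integral_mono WW_int prod_le) auto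
    also have "\<dots> \<le> K"
      using that W_sq W_sq_le[OF that(1)] W_sq_le[OF that(2)] by simp
    finally show ?thesis .
  qed
  have square: "(\<Sum>i\<in>I. a i * W i x)\<^sup>2 = (\<Sum>i\<in>I. \<Sum>j\<in>I. a i * a j * (W i x * W j x))" for x
    by (simp add: power2_eq_square sum_product mult_ac)
  show "integrable M (\<lambda>x. (\<Sum>i\<in>I. a i * W i x)\<^sup>2)"
    unfolding square using WW_int by simp
  have term_le: "a i * a j * (\<integral>x. W i x * W j x \<partial>M) \<le> (if j \<in> N i then A\<^sup>2 * K else 0)"
    if ij: "i \<in> I" "j \<in> I" for i j
  proof (cases "j \<in> N i")
    case True
    have "0 \<le> (\<integral>x. (W i x)\<^sup>2 \<partial>M)"
      by (simp add: Bochner_Integration.integral_nonneg)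
    then have "0 \<le> K"
      using W_sq_le[OF ij(1)] by linarith
    have "a i * a j * (\<integral>x. W i x * W j x \<partial>M) \<le> a i * a j * K"
      using a ij WW_le[OF ij] by (intro mult_left_mono) auto
    also have "\<dots> \<le> A\<^sup>2 * K"
      unfolding power2_eq_square using a[OF ij(1)] a[OF ij(2)] \<open>0 \<le> K\<close>
      by (intro mult_right_mono mult_mono) auto
    finally have "a i * a j * (\<integral>x. W i x * W j x \<partial>M) \<le> A\<^sup>2 * K" .
    with True show ?thesis by simp
  qed (use uncorrelated ij in simp)
  have "(\<integral>x. (\<Sum>i\<in>I. a i * W i x)\<^sup>2 \<partial>M) = (\<Sum>i\<in>I. \<Sum>j\<in>I. a i * a j * (\<integral>x. W i x * W j x \<partial>M))"
    unfolding square using WW_int by simp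
  also have "\<dots> \<le> (\<Sum>i\<in>I. \<Sum>j\<in>I. if j \<in> N i then A\<^sup>2 * K else 0)"
    using term_le by (intro sum_mono) auto
  also have "\<dots> = (\<Sum>i\<in>I. real (card (N i)) * (A\<^sup>2 * K))"
    using I N by (intro sum.cong refl) (simp add: sum.If_cases Int_absorb1)
  also have "\<dots> = A\<^sup>2 * K * (\<Sum>i\<in>I. real (card (N i)))"
    by (simp add: sum_distrib_left mult.commute)
  finally show "(\<integral>x. (\<Sum>i\<in>I. a i * W i x)\<^sup>2 \<partial>M) \<le> A\<^sup>2 * K * (\<Sum>i\<in>I. real (card (N i)))" .
qed

lemma (in prob_space) riesz_estimator_mse_le:
  fixes y psi :: "nat \<Rightarrow> 'a \<Rightarrow> real" and \<nu> :: "nat \<Rightarrow> nat \<Rightarrow> real"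
  assumes [measurable]: "\<And>i. y i \<in> borel_measurable M" "\<And>i. psi i \<in> borel_measurable M"
    and sq_int: "\<And>i. integrable M (\<lambda>x. (y i x * psi i x)\<^sup>2)"
    and sq_le: "\<And>i. expectation (\<lambda>x. (y i x * psi i x)\<^sup>2) \<le> K"
    and c: "\<And>i. c i = expectation (\<lambda>x. y i x * psi i x)"
    and \<nu>: "\<And>i. i \<in> {1..n} \<Longrightarrow> 0 \<le> \<nu> n i" "\<And>i. i \<in> {1..n} \<Longrightarrow> real n * \<nu> n i \<le> \<nu>bar"
  defines "X \<equiv> \<lambda>x. (\<Sum>i\<in>{1..n}. \<nu> n i * (y i x * psi i x)) - (\<Sum>i\<in>{1..n}. \<nu> n i * c i)"
  shows "integrable M (\<lambda>x. (X x)\<^sup>2)"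
    and "expectation (\<lambda>x. (X x)\<^sup>2) \<le> \<nu>bar\<^sup>2 * K * avg_dep M y psi n / real n"
proof -
  define W where "W i x = y i x * psi i x - c i" for i x
  have [measurable]: "W i \<in> borel_measurable M" for i
    unfolding W_def by measurable
  have int: "integrable M (\<lambda>x. y i x * psi i x)" for i
    by (rule square_integrable_imp_integrable[OF _ sq_int]) measurable
  have W_sq: "integrable M (\<lambda>x. (W i x)\<^sup>2)" for i
    unfolding W_def power2_diff using sq_int int by simp
  have W_sq_le: "expectation (\<lambda>x. (W i x)\<^sup>2) \<le> K" for i
  proof -
    have "expectation (\<lambda>x. (W i x)\<^sup>2) = variance (\<lambda>x. y i x * psi i x)"
      by (simp add: W_def c)
    also have "\<dots> = expectation (\<lambda>x. (y i x * psi i x)\<^sup>2) - (expectation (\<lambda>x. y i x * psi i x))\<^sup>2"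
      by (rule variance_eq[OF int sq_int])
    also have "\<dots> \<le> K"
      using sq_le[of i] zero_le_power2[of "expectation (\<lambda>x. y i x * psi i x)"] by linarith
    finally show ?thesis .
  qed
  have W_int: "integrable M (W i)" for i
    using int by (simp add: W_def[abs_def])
  have W_mean: "expectation (W i) = 0" for i
    using int by (simp add: W_def[abs_def] c prob_space)
  have uncorrelated: "expectation (\<lambda>x. W i x * W j x) = 0"
    if "j \<in> {1..n} - dep_nbhd M y psi n i" for i j
  proof -
    have "indep_var borel (W i) borel (W j)"
      using indep_var_outside_dep_nbhd[of y psi "\<lambda>(u, v). u * v - c i" "\<lambda>(u, v). u * v - c j" j n i] that
      by (simp add: W_def[abs_def])
    from indep_var_lebesgue_integral[OF this W_int W_int] show ?thesis
      by (simp add: W_mean)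
  qed
  have weights: "\<nu> n i \<le> \<nu>bar / real n" if "i \<in> {1..n}" for i
    using \<nu>(2)[OF that] that by (simp add: field_simps)
  have X_eq: "X x = (\<Sum>i\<in>{1..n}. \<nu> n i * W i x)" for x
    by (simp add: X_def W_def sum_subtractf[symmetric] right_diff_distrib)
  note bound = integral_square_weighted_sum_le[of "{1..n}" W M K "dep_nbhd M y psi n" "\<nu> n"
      "\<nu>bar / real n", OF _ _ W_sq W_sq_le dep_nbhd_subset uncorrelated \<nu>(1) weights]
  show "integrable M (\<lambda>x. (X x)\<^sup>2)"
    unfolding X_eq using bound(1) by simp
  have "(\<nu>bar / real n)\<^sup>2 * K * (\<Sum>i\<in>{1..n}. real (card (dep_nbhd M y psi n i)))
      = \<nu>bar\<^sup>2 * K * avg_dep M y psi n / real n"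
    by (simp add: avg_dep_def power2_eq_square)
  then show "expectation (\<lambda>x. (X x)\<^sup>2) \<le> \<nu>bar\<^sup>2 * K * avg_dep M y psi n / real n"
    unfolding X_eq using bound(2) by simp
qed

lemma (in prob_space) bigO_p_inverse_sqrt_of_second_moment:
  fixes X :: "nat \<Rightarrow> 'a \<Rightarrow> real"
  assumes [measurable]: "\<And>n. X n \<in> borel_measurable M"
    and sq_int: "\<And>n. integrable M (\<lambda>x. (X n x)\<^sup>2)"
    and sq_le: "\<And>n. n \<ge> 1 \<Longrightarrow> (\<integral>x. (X n x)\<^sup>2 \<partial>M) \<le> A / real n"
  shows "bigO_p M X (\<lambda>n. 1 / sqrt (real n))"
  unfolding bigO_p_def
proof (intro allI impI)
  fix \<epsilon> :: real assume "0 < \<epsilon>"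
  define B where "B = max A 0 + 1"
  have "B > 0" by (simp add: B_def)
  define K where "K = sqrt (B / \<epsilon>)"
  have "K > 0" "K\<^sup>2 = B / \<epsilon>"
    using \<open>0 < B\<close> \<open>0 < \<epsilon>\<close> by (simp_all add: K_def)
  have "measure M {x \<in> space M. \<bar>X n x\<bar> > K * (1 / sqrt (real n))} < \<epsilon>" if "n \<ge> 1" for n
  proof -
    have "measure M {x \<in> space M. \<bar>X n x\<bar> > K * (1 / sqrt (real n))}
        \<le> measure M {x \<in> space M. \<bar>X n x\<bar> \<ge> K / sqrt (real n)}"
      by (intro finite_measure_mono) auto
    also have "\<dots> \<le> (\<integral>x. (X n x)\<^sup>2 \<partial>M) / (K / sqrt (real n))\<^sup>2"
      using \<open>K > 0\<close> that by (intro second_moment_method sq_int) auto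
    also have "\<dots> \<le> (A / real n) / (K / sqrt (real n))\<^sup>2"
      by (intro divide_right_mono sq_le that) simp
    also have "\<dots> = A * \<epsilon> / B"
      using that \<open>K > 0\<close> \<open>B > 0\<close> \<open>K\<^sup>2 = B / \<epsilon>\<close> \<open>0 < \<epsilon>\<close> by (simp add: power_divide field_simps)
    also have "\<dots> < \<epsilon>"
    proof -
      have "A * \<epsilon> < B * \<epsilon>"
        using \<open>0 < \<epsilon>\<close> by (intro mult_strict_right_mono) (auto simp: B_def)
      then show ?thesis
        using \<open>0 < B\<close> by (simp add: pos_divide_less_eq mult.commute)
    qed
    finally show ?thesis .
  qed
  then show "\<exists>K N. \<forall>n\<ge>N. measure M {x \<in> space M. \<bar>X n x\<bar> > K * (1 / sqrt (real n))} < \<epsilon>"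
    by blast
qed

lemma (in prob_space) mse_consistency_and_rate:
  fixes X :: "nat \<Rightarrow> 'a \<Rightarrow> real" and d :: "nat \<Rightarrow> real"
  assumes [measurable]: "\<And>n. X n \<in> borel_measurable M"
    and sq_int: "\<And>n. integrable M (\<lambda>x. (X n x)\<^sup>2)"
    and mse: "\<And>n. expectation (\<lambda>x. (X n x)\<^sup>2) \<le> C * d n / real n" and "0 \<le> C"
  shows "d \<in> o(\<lambda>n. real n) \<Longrightarrow> (\<lambda>n. expectation (\<lambda>x. (X n x)\<^sup>2)) \<longlonglongrightarrow> 0"
    and "\<exists>B. \<forall>n. d n \<le> B \<Longrightarrow> bigO_p M X (\<lambda>n. 1 / sqrt (real n))"
proof -
  assume "d \<in> o(\<lambda>n. real n)"
  show "(\<lambda>n. expectation (\<lambda>x. (X n x)\<^sup>2)) \<longlonglongrightarrow> 0"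
  proof (rule Lim_null_comparison)
    show "\<forall>\<^sub>F n in sequentially. norm (expectation (\<lambda>x. (X n x)\<^sup>2)) \<le> C * (d n / real n)"
      using mse by (simp add: Bochner_Integration.integral_nonneg)
    show "(\<lambda>n. C * (d n / real n)) \<longlonglongrightarrow> 0"
      using smalloD_tendsto[OF \<open>d \<in> o(\<lambda>n. real n)\<close>] by (intro tendsto_mult_right_zero) simp
  qed
next
  assume "\<exists>B. \<forall>n. d n \<le> B"
  then obtain B where "\<And>n. d n \<le> B" by blast
  show "bigO_p M X (\<lambda>n. 1 / sqrt (real n))"
  proof (rule bigO_p_inverse_sqrt_of_second_moment[where A = "C * B"])
    show "expectation (\<lambda>x. (X n x)\<^sup>2) \<le> C * B / real n" for n
      using mse[of n] mult_left_mono[OF \<open>d n \<le> B\<close> \<open>0 \<le> C\<close>]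
      by (meson divide_right_mono of_nat_0_le_iff order_trans)
  qed (use sq_int in auto)
qed

theorem theorem3:
  fixes mu :: "'z measure" and P :: "'w measure"
    and y psi :: "nat \<Rightarrow> 'z \<times> 'w \<Rightarrow> real"
    and Mod :: "nat \<Rightarrow> ('z \<times> 'w \<Rightarrow> real) set"
    and theta :: "nat \<Rightarrow> ('z \<times> 'w \<Rightarrow> real) \<Rightarrow> real"
    and \<nu> :: "nat \<Rightarrow> nat \<Rightarrow> real" and \<nu>bar :: real and p q :: ereal
  assumes mu: "prob_space mu" and P: "prob_space P"
    and meas_y: "\<And>i. y i \<in> borel_measurable (mu \<Otimes>\<^sub>M P)"
    and model: "\<And>i. closed_L2_subspace (mu \<Otimes>\<^sub>M P) (Mod i)"
    and y_in: "\<And>i. y i \<in> Mod i" and psi_in: "\<And>i. psi i \<in> Mod i"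
    and riesz: "\<And>i u. u \<in> Mod i \<Longrightarrow> theta i u = (\<integral>x. u x * psi i x \<partial>(mu \<Otimes>\<^sub>M P))"
    and \<nu>_nonneg: "\<And>n i. i \<in> {1..n} \<Longrightarrow> 0 \<le> \<nu> n i"
    and \<nu>bar: "\<nu>bar > 0" "\<And>n i. i \<in> {1..n} \<Longrightarrow> real n * \<nu> n i \<le> \<nu>bar"
    and dn: "avg_dep (mu \<Otimes>\<^sub>M P) y psi \<in> o(\<lambda>n. real n)"
    and pq: "2 \<le> p" "2 \<le> q" "1 / p + 1 / q = 1 / 2"
    and y_bdd: "\<exists>C. \<forall>i. Lp_norm_le (mu \<Otimes>\<^sub>M P) p (y i) C"
    and psi_bdd: "\<exists>C. \<forall>i. Lp_norm_le (mu \<Otimes>\<^sub>M P) q (psi i) C"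
  shows "(\<lambda>n. \<integral>x. ((\<Sum>i\<in>{1..n}. \<nu> n i * (y i x * psi i x))
                      - (\<Sum>i\<in>{1..n}. \<nu> n i * theta i (y i)))\<^sup>2 \<partial>(mu \<Otimes>\<^sub>M P))
           \<longlonglongrightarrow> 0
       \<and> ((\<exists>B. \<forall>n. avg_dep (mu \<Otimes>\<^sub>M P) y psi n \<le> B) \<longrightarrow>
          bigO_p (mu \<Otimes>\<^sub>M P)
            (\<lambda>n x. (\<Sum>i\<in>{1..n}. \<nu> n i * (y i x * psi i x))
                   - (\<Sum>i\<in>{1..n}. \<nu> n i * theta i (y i)))
            (\<lambda>n. 1 / sqrt (real n)))"
proof -
  let ?M = "mu \<Otimes>\<^sub>M P"
  interpret prob_space ?M
    by (rule prob_space_pair[OF mu P])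
  have psi_meas[measurable]: "psi i \<in> borel_measurable ?M" for i
    using model[of i] psi_in[of i] by (auto simp: closed_L2_subspace_def L2_fun_def)
  obtain K where "0 \<le> K" and sq_int: "\<And>i. integrable ?M (\<lambda>x. (y i x * psi i x)\<^sup>2)"
    and sq_le: "\<And>i. expectation (\<lambda>x. (y i x * psi i x)\<^sup>2) \<le> K"
    using square_moments_uniformly_bounded[OF pq y_bdd psi_bdd] by blast
  define X where "X n x = (\<Sum>i\<in>{1..n}. \<nu> n i * (y i x * psi i x))
    - (\<Sum>i\<in>{1..n}. \<nu> n i * theta i (y i))" for n x
  have X_meas: "X n \<in> borel_measurable ?M" for n
    unfolding X_def using meas_y by measurable
  have mse: "integrable ?M (\<lambda>x. (X n x)\<^sup>2)"
    "expectation (\<lambda>x. (X n x)\<^sup>2) \<le> \<nu>bar\<^sup>2 * K * avg_dep ?M y psi n / real n" for n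
    using riesz_estimator_mse_le[where y = y and psi = psi and \<nu> = \<nu>
        and c = "\<lambda>i. theta i (y i)" and n = n, OF meas_y psi_meas sq_int sq_le riesz[OF y_in] \<nu>_nonneg \<nu>bar(2)]
    unfolding X_def by auto
  have "0 \<le> \<nu>bar\<^sup>2 * K"
    using \<open>0 \<le> K\<close> by simp
  from mse_consistency_and_rate[OF X_meas mse(1) mse(2) this] dn show ?thesis
    unfolding X_def by blast
qed

end
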